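(* Let $0<\alpha \leq \beta \leq d$, let $Q_0\subset\mathbb{R}^d$ be a cube, and suppose $u \in BMO^\alpha(Q_0)$. Then $u \in BMO^\beta(Q_0)$ and $$\|u\|_{BMO^\beta(Q_0)} \leq C\|u\|_{BMO^\alpha(Q_0)}$$ for a constant $C=C(\alpha,\beta)>0$ independent of $u$.
   Context: For $\gamma\in(0,d]$: $\mathcal{H}^{\gamma}_{\infty}(E)= \inf \{\sum_{i} \omega_\gamma r_i^\gamma : E \subset \bigcup_{i} B(x_i,r_i) \}$, $\omega_\gamma= \pi^{\gamma/2}/\Gamma(\gamma/2+1)$. $f$ is $\mathcal{H}^\gamma_\infty$-quasicontinuous if for every $\epsilon>0$ there is an open $O$ with $\mathcal{H}^\gamma_\infty(O)<\epsilon$ and $f|_{O^c}$ continuous. Choquet integral: $\int_A f\,d\mathcal{H}^\gamma_\infty=\int_0^\infty \mathcal{H}^\gamma_\infty(\{x\in A: f(x)>t\})\,dt$ for $f\ge0$. $L^1(Q_0;\mathcal{H}^\gamma_\infty)$: quasicontinuous $f$ with $\int_{Q_0}|f|\,d\mathcal{H}^\gamma_\infty<\infty$. $\|u\|_{BMO^{\gamma}(Q_0)}= \sup_{Q} \inf_{c \in \mathbb{R}} l(Q)^{-\gamma} \int_{Q} |u-c| \,d\mathcal{H}^{\gamma}_\infty$ over finite subcubes $Q\subset Q_0$ with sides parallel to those of $Q_0$, $l(Q)$ = side length; $BMO^\gamma(Q_0)$ is the set of $u\in L^1(Q_0;\mathcal{H}^\gamma_\infty)$ with this finite. *)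

theory Defs
  imports "HOL-Analysis.Analysis"
begin

definition omega_const :: "real \<Rightarrow> real" where
  "omega_const \<gamma> = pi powr (\<gamma> / 2) / Gamma (\<gamma> / 2 + 1)"

text \<open>Hausdorff content of dimension gamma: infimum over countable covers by (open) balls.
  Radii 0 give empty balls, so finite covers are included.\<close>
definition hcontent :: "real \<Rightarrow> 'a::euclidean_space set \<Rightarrow> ennreal" where
  "hcontent \<gamma> E = (INF cr \<in> {(c, r). (\<forall>i. 0 \<le> r i) \<and> E \<subseteq> (\<Union>i. ball (c i) (r i))}.
      (\<Sum>i. ennreal (omega_const \<gamma> * (snd cr i) powr \<gamma>)))"

definition choquet :: "real \<Rightarrow> 'a::euclidean_space set \<Rightarrow> ('a \<Rightarrow> real) \<Rightarrow> ennreal" where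
  "choquet \<gamma> A f = (\<integral>\<^sup>+ t \<in> {0..}. hcontent \<gamma> {x \<in> A. f x > t} \<partial>lborel)"

definition quasicont :: "real \<Rightarrow> 'a::euclidean_space set \<Rightarrow> ('a \<Rightarrow> real) \<Rightarrow> bool" where
  "quasicont \<gamma> Q f \<longleftrightarrow> (\<forall>\<epsilon>>0. \<exists>U. open U \<and> hcontent \<gamma> U < ennreal \<epsilon> \<and> continuous_on (Q - U) f)"

definition L1H :: "real \<Rightarrow> 'a::euclidean_space set \<Rightarrow> ('a \<Rightarrow> real) set" where
  "L1H \<gamma> Q = {f. quasicont \<gamma> Q f \<and> choquet \<gamma> Q (\<lambda>x. \<bar>f x\<bar>) < \<infinity>}"

definition cube :: "'a::euclidean_space \<Rightarrow> real \<Rightarrow> 'a set" where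
  "cube x l = cbox x (x + l *\<^sub>R One)"

definition bmo_norm :: "real \<Rightarrow> 'a::euclidean_space set \<Rightarrow> ('a \<Rightarrow> real) \<Rightarrow> ennreal" where
  "bmo_norm \<gamma> Q0 u = (SUP xl \<in> {(x, l). 0 < l \<and> cube x l \<subseteq> Q0}.
      (INF c::real. ennreal ((snd xl) powr (- \<gamma>)) * choquet \<gamma> (cube (fst xl) (snd xl)) (\<lambda>y. \<bar>u y - c\<bar>)))"

definition BMO :: "real \<Rightarrow> 'a::euclidean_space set \<Rightarrow> ('a \<Rightarrow> real) set" where
  "BMO \<gamma> Q0 = {u. u \<in> L1H \<gamma> Q0 \<and> bmo_norm \<gamma> Q0 u < \<infinity>}"

end

theory Submission
  imports Defs
begin

text \<open>Let E lie in a ball B of radius R. Any cover of E by balls either has all radii at most R,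
  or contains a ball whose alpha-cost already exceeds that of B, which alone covers E. For radii
  r \<le> R we have r^beta \<le> R^(beta-alpha) r^alpha, hence the beta-content of E is at most a
  constant times R^(beta-alpha) times its alpha-content. On subcubes of side l this factor l^(beta-alpha)
  passes to the Choquet integrals and is absorbed exactly by the normalisations l^(-beta) and
  l^(-alpha) of the two BMO norms. Quasicontinuity transfers because a set of small alpha-content
  is covered by balls of radius at most 1.\<close>

definition content_ratio :: "real \<Rightarrow> real \<Rightarrow> real \<Rightarrow> real" where
  "content_ratio \<alpha> \<beta> R = omega_const \<beta> / omega_const \<alpha> * R powr (\<beta> - \<alpha>)"

lemma omega_const_pos: "0 < \<gamma> \<Longrightarrow> 0 < omega_const \<gamma>"
  unfolding omega_const_def by (intro divide_pos_pos Gamma_real_pos) auto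

lemma content_ratio_pos: "0 < \<alpha> \<Longrightarrow> \<alpha> \<le> \<beta> \<Longrightarrow> 0 < R \<Longrightarrow> 0 < content_ratio \<alpha> \<beta> R"
  unfolding content_ratio_def by (simp add: omega_const_pos)

lemma content_ratio_mult:
  "0 \<le> D \<Longrightarrow> 0 \<le> l \<Longrightarrow> content_ratio \<alpha> \<beta> (D * l) = content_ratio \<alpha> \<beta> D * l powr (\<beta> - \<alpha>)"
  unfolding content_ratio_def by (simp add: powr_mult)

lemma omega_powr_le_content_ratio:
  assumes "0 < \<alpha>" "\<alpha> \<le> \<beta>" "0 \<le> r" "r \<le> R"
  shows "omega_const \<beta> * r powr \<beta> \<le> content_ratio \<alpha> \<beta> R * (omega_const \<alpha> * r powr \<alpha>)"
proof -
  have \<omega>: "0 < omega_const \<alpha>" "0 < omega_const \<beta>"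
    using assms by (auto intro: omega_const_pos)
  have "r powr \<beta> = r powr (\<beta> - \<alpha>) * r powr \<alpha>"
    using assms by (cases "r = 0") (simp_all add: powr_add[symmetric])
  also have "\<dots> \<le> R powr (\<beta> - \<alpha>) * r powr \<alpha>"
    using assms by (intro mult_right_mono powr_mono2) auto
  finally show ?thesis
    using \<omega> by (simp add: content_ratio_def field_simps)
qed

lemma ennreal_le_mult_INF:
  fixes g :: ennreal
  assumes "0 < K" and "\<And>x. x \<in> A \<Longrightarrow> g \<le> ennreal K * f x"
  shows "g \<le> ennreal K * (INF x\<in>A. f x)"
proof -
  have inverse: "ennreal K * ennreal (1 / K) = 1"
    using assms(1) by (simp add: ennreal_mult[symmetric])
  have "ennreal (1 / K) * g \<le> (INF x\<in>A. f x)"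
  proof (rule INF_greatest)
    fix x assume "x \<in> A"
    have "ennreal (1 / K) * g \<le> ennreal (1 / K) * (ennreal K * f x)"
      using assms(2)[OF \<open>x \<in> A\<close>] by (rule mult_left_mono) simp
    also have "\<dots> = f x"
      using inverse by (simp add: mult.assoc[symmetric] mult.commute)
    finally show "ennreal (1 / K) * g \<le> f x" .
  qed
  then have "ennreal K * (ennreal (1 / K) * g) \<le> ennreal K * (INF x\<in>A. f x)"
    by (rule mult_left_mono) simp
  then show ?thesis
    using inverse by (simp add: mult.assoc[symmetric])
qed

lemma hcontent_mono: "E \<subseteq> F \<Longrightarrow> hcontent \<gamma> E \<le> hcontent \<gamma> F"
  unfolding hcontent_def by (rule INF_superset_mono) auto

lemma hcontent_le_cover_sum:
  assumes "0 < \<alpha>" "\<alpha> \<le> \<beta>" and r: "\<And>i. 0 \<le> r i \<and> r i \<le> R"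
    and cover: "E \<subseteq> (\<Union>i. ball (c i) (r i))"
  shows "hcontent \<beta> E \<le> ennreal (content_ratio \<alpha> \<beta> R) * (\<Sum>i. ennreal (omega_const \<alpha> * r i powr \<alpha>))"
proof -
  have "hcontent \<beta> E \<le> (\<Sum>i. ennreal (omega_const \<beta> * r i powr \<beta>))"
    unfolding hcontent_def by (rule INF_lower2[of "(c, r)"]) (use r cover in auto)
  also have "\<dots> \<le> (\<Sum>i. ennreal (content_ratio \<alpha> \<beta> R) * ennreal (omega_const \<alpha> * r i powr \<alpha>))"
  proof (intro suminf_le summableI)
    fix i
    have "0 \<le> content_ratio \<alpha> \<beta> R"
      using assms r[of i] by (auto simp: content_ratio_def omega_const_pos less_imp_le)
    then show "ennreal (omega_const \<beta> * r i powr \<beta>)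
        \<le> ennreal (content_ratio \<alpha> \<beta> R) * ennreal (omega_const \<alpha> * r i powr \<alpha>)"
      using assms r[of i]
      by (subst ennreal_mult'[symmetric]) (auto intro!: ennreal_leI omega_powr_le_content_ratio)
  qed
  finally show ?thesis
    by simp
qed

lemma hcontent_le_of_subset_ball:
  fixes E :: "'a::euclidean_space set"
  assumes \<alpha>\<beta>: "0 < \<alpha>" "\<alpha> \<le> \<beta>" and "0 < R" and E: "E \<subseteq> ball x R"
  shows "hcontent \<beta> E \<le> ennreal (content_ratio \<alpha> \<beta> R) * hcontent \<alpha> E"
  unfolding hcontent_def[of \<alpha>]
proof (rule ennreal_le_mult_INF)
  show "0 < content_ratio \<alpha> \<beta> R"
    using assms by (simp add: content_ratio_pos)
  fix cr :: "(nat \<Rightarrow> 'a) \<times> (nat \<Rightarrow> real)"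
  assume "cr \<in> {(c, r). (\<forall>i. 0 \<le> r i) \<and> E \<subseteq> (\<Union>i. ball (c i) (r i))}"
  then obtain c r where cr: "cr = (c, r)" and r: "\<And>i. 0 \<le> r i"
    and cover: "E \<subseteq> (\<Union>i. ball (c i) (r i))" by auto
  let ?cost = "\<lambda>r. (\<Sum>i. ennreal (omega_const \<alpha> * r i powr \<alpha>))"
  have "hcontent \<beta> E \<le> ennreal (content_ratio \<alpha> \<beta> R) * ?cost r"
  proof (cases "\<forall>i. r i \<le> R")
    case True
    then show ?thesis
      using hcontent_le_cover_sum[OF \<alpha>\<beta> _ cover] r by blast
  next
    case False
    then obtain j where "R < r j" by (auto simp: not_le)
    define single where "single = (\<lambda>i::nat. if i = 0 then R else 0)"
    have "hcontent \<beta> E \<le> ennreal (content_ratio \<alpha> \<beta> R) * ?cost single"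
      by (rule hcontent_le_cover_sum[OF \<alpha>\<beta>, where c = "\<lambda>_. x"])
         (use E \<open>0 < R\<close> in \<open>auto simp: single_def\<close>)
    also have "?cost single = ennreal (omega_const \<alpha> * R powr \<alpha>)"
      unfolding single_def by (subst suminf_finite[of "{0}"]) auto
    also have "\<dots> \<le> ennreal (omega_const \<alpha> * r j powr \<alpha>)"
      using \<open>R < r j\<close> \<open>0 < R\<close> \<alpha>\<beta>
      by (intro ennreal_leI mult_left_mono powr_mono2) (auto intro: omega_const_pos less_imp_le)
    also have "\<dots> \<le> ?cost r"
      using sum_le_suminf[OF summableI, of "{j}" "\<lambda>i. ennreal (omega_const \<alpha> * r i powr \<alpha>)"] by simp
    finally show ?thesis
      by (simp add: mult_left_mono)
  qed
  then show "hcontent \<beta> E \<le> ennreal (content_ratio \<alpha> \<beta> R) * ?cost (snd cr)"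
    using cr by simp
qed

lemma hcontent_le_of_small_hcontent:
  fixes U :: "'a::euclidean_space set"
  assumes \<alpha>\<beta>: "0 < \<alpha>" "\<alpha> \<le> \<beta>" and "0 \<le> R"
    and small: "hcontent \<alpha> U < ennreal \<delta>" "\<delta> \<le> omega_const \<alpha> * R powr \<alpha>"
  shows "hcontent \<beta> U \<le> ennreal (content_ratio \<alpha> \<beta> R) * ennreal \<delta>"
proof -
  let ?cost = "\<lambda>r. (\<Sum>i. ennreal (omega_const \<alpha> * r i powr \<alpha>))"
  obtain c r where r: "\<And>i. 0 \<le> r i" and cover: "U \<subseteq> (\<Union>i. ball (c i) (r i))"
    and cost: "?cost r < ennreal \<delta>"
    using small(1) unfolding hcontent_def INF_less_iff by auto
  have "r i \<le> R" for i
  proof (rule ccontr)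
    assume "\<not> r i \<le> R"
    then have "omega_const \<alpha> * R powr \<alpha> < omega_const \<alpha> * r i powr \<alpha>"
      using \<alpha>\<beta> \<open>0 \<le> R\<close>
      by (intro mult_strict_left_mono powr_less_mono2) (auto intro: omega_const_pos)
    moreover have "0 \<le> omega_const \<alpha> * R powr \<alpha>"
      using \<alpha>\<beta> by (simp add: omega_const_pos less_imp_le)
    ultimately have "ennreal \<delta> < ennreal (omega_const \<alpha> * r i powr \<alpha>)"
      using small(2) by (intro ennreal_lessI) linarith+
    also have "\<dots> \<le> ?cost r"
      using sum_le_suminf[OF summableI, of "{i}" "\<lambda>i. ennreal (omega_const \<alpha> * r i powr \<alpha>)"] by simp
    finally show False
      using cost by simp
  qed
  then have "hcontent \<beta> U \<le> ennreal (content_ratio \<alpha> \<beta> R) * ?cost r"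
    using hcontent_le_cover_sum[OF \<alpha>\<beta> _ cover] r by blast
  also have "\<dots> \<le> ennreal (content_ratio \<alpha> \<beta> R) * ennreal \<delta>"
    using cost by (simp add: mult_left_mono less_imp_le)
  finally show ?thesis .
qed

lemma cube_subset_ball:
  fixes x :: "'a::euclidean_space"
  assumes "0 < l"
  shows "cube x l \<subseteq> ball x ((real DIM('a) + 1) * l)"
proof
  fix y assume "y \<in> cube x l"
  then have coord: "\<And>i. i \<in> Basis \<Longrightarrow> \<bar>(y - x) \<bullet> i\<bar> \<le> l"
    unfolding cube_def mem_box by (auto simp: inner_diff_left inner_add_left)
  have "dist x y \<le> (\<Sum>i\<in>Basis. \<bar>(y - x) \<bullet> i\<bar>)"
    using norm_le_l1[of "y - x"] by (simp add: dist_norm norm_minus_commute)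
  also have "\<dots> \<le> real DIM('a) * l"
    using sum_mono[of Basis _ "\<lambda>_. l", OF coord] by simp
  also have "\<dots> < (real DIM('a) + 1) * l"
    using assms by (simp add: distrib_right)
  finally show "y \<in> ball x ((real DIM('a) + 1) * l)" by simp
qed

lemma hcontent_le_of_subset_cube:
  fixes x :: "'a::euclidean_space"
  assumes "0 < \<alpha>" "\<alpha> \<le> \<beta>" "0 < l" "S \<subseteq> cube x l"
  shows "hcontent \<beta> S
    \<le> ennreal (content_ratio \<alpha> \<beta> (real DIM('a) + 1) * l powr (\<beta> - \<alpha>)) * hcontent \<alpha> S"
  using hcontent_le_of_subset_ball[of \<alpha> \<beta> "(real DIM('a) + 1) * l" S x] cube_subset_ball[of l x]
    assms by (simp add: content_ratio_mult)

lemma antimono_borel_measurable: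
  fixes g :: "real \<Rightarrow> 'b::{linorder_topology, second_countable_topology}"
  assumes "antimono g"
  shows "g \<in> borel_measurable borel"
proof (rule borel_measurableI_greater)
  fix y
  have "is_interval {t. y < g t}"
    unfolding is_interval_1 using assms by (auto intro: less_le_trans dest: antimonoD)
  then show "{t \<in> space borel. y < g t} \<in> sets borel"
    by (simp add: real_interval_borel_measurable)
qed

lemma choquet_le_cmult:
  assumes "\<And>S. S \<subseteq> Q \<Longrightarrow> hcontent \<beta> S \<le> ennreal K * hcontent \<alpha> S"
  shows "choquet \<beta> Q f \<le> ennreal K * choquet \<alpha> Q f"
proof -
  define g where "g t = hcontent \<alpha> {x \<in> Q. f x > t}" for t
  have "antimono g"
    unfolding g_def by (intro antimonoI hcontent_mono) auto
  then have [measurable]: "g \<in> borel_measurable lborel"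
    by (simp add: antimono_borel_measurable)
  have "choquet \<beta> Q f \<le> (\<integral>\<^sup>+ t. ennreal K * (g t * indicator {0..} t) \<partial>lborel)"
    unfolding choquet_def g_def
    by (rule nn_integral_mono) (auto simp: indicator_def intro: assms)
  also have "\<dots> = ennreal K * (\<integral>\<^sup>+ t. g t * indicator {0..} t \<partial>lborel)"
    by (rule nn_integral_cmult) measurable
  finally show ?thesis
    unfolding choquet_def g_def .
qed

lemma quasicont_larger_dim:
  assumes \<alpha>\<beta>: "0 < \<alpha>" "\<alpha> \<le> \<beta>" and "quasicont \<alpha> Q u"
  shows "quasicont \<beta> Q u"
  unfolding quasicont_def
proof (intro allI impI)
  fix \<epsilon> :: real assume "0 < \<epsilon>"
  define q where "q = content_ratio \<alpha> \<beta> 1"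
  have "0 < q"
    unfolding q_def using \<alpha>\<beta> by (simp add: content_ratio_pos)
  define \<delta> where "\<delta> = min (omega_const \<alpha>) (\<epsilon> / (2 * q))"
  have \<delta>: "0 < \<delta>" "\<delta> \<le> omega_const \<alpha> * 1 powr \<alpha>" "q * \<delta> < \<epsilon>"
    unfolding \<delta>_def using \<alpha>\<beta> \<open>0 < \<epsilon>\<close> \<open>0 < q\<close> by (auto simp: min_def field_simps omega_const_pos)
  obtain U where U: "open U" "hcontent \<alpha> U < ennreal \<delta>" "continuous_on (Q - U) u"
    using \<open>quasicont \<alpha> Q u\<close> \<open>0 < \<delta>\<close> unfolding quasicont_def by blast
  have "hcontent \<beta> U \<le> ennreal q * ennreal \<delta>"
    unfolding q_def using hcontent_le_of_small_hcontent[OF \<alpha>\<beta> _ U(2) \<delta>(2)] by simp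
  also have "\<dots> < ennreal \<epsilon>"
    using \<open>0 < q\<close> \<open>0 < \<epsilon>\<close> \<delta> by (simp add: ennreal_mult[symmetric] ennreal_lessI)
  finally show "\<exists>U. open U \<and> hcontent \<beta> U < ennreal \<epsilon> \<and> continuous_on (Q - U) u"
    using U by blast
qed

lemma cube_oscillation_le:
  fixes x :: "'a::euclidean_space"
  assumes \<alpha>\<beta>: "0 < \<alpha>" "\<alpha> \<le> \<beta>" and "0 < l"
  defines "C \<equiv> content_ratio \<alpha> \<beta> (real DIM('a) + 1)"
  shows "(INF c. ennreal (l powr - \<beta>) * choquet \<beta> (cube x l) (\<lambda>y. \<bar>u y - c\<bar>))
    \<le> ennreal C * (INF c. ennreal (l powr - \<alpha>) * choquet \<alpha> (cube x l) (\<lambda>y. \<bar>u y - c\<bar>))"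
proof (rule ennreal_le_mult_INF)
  show "0 < C"
    unfolding C_def using \<alpha>\<beta> by (simp add: content_ratio_pos add_pos_nonneg)
  fix c :: real
  let ?osc = "\<lambda>\<gamma>. choquet \<gamma> (cube x l) (\<lambda>y. \<bar>u y - c\<bar>)"
  have "(INF c. ennreal (l powr - \<beta>) * choquet \<beta> (cube x l) (\<lambda>y. \<bar>u y - c\<bar>))
      \<le> ennreal (l powr - \<beta>) * ?osc \<beta>"
    by (rule INF_lower) simp
  also have "\<dots> \<le> ennreal (l powr - \<beta>) * (ennreal (C * l powr (\<beta> - \<alpha>)) * ?osc \<alpha>)"
    unfolding C_def
    by (intro mult_left_mono choquet_le_cmult hcontent_le_of_subset_cube) (use assms in auto)
  also have "\<dots> = ennreal (l powr - \<beta> * (C * l powr (\<beta> - \<alpha>))) * ?osc \<alpha>"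
    using \<open>0 < C\<close> by (simp add: ennreal_mult mult.assoc)
  also have "l powr - \<beta> * (C * l powr (\<beta> - \<alpha>)) = C * l powr - \<alpha>"
    by (simp add: powr_add[symmetric] mult.left_commute)
  also have "ennreal (C * l powr - \<alpha>) * ?osc \<alpha> = ennreal C * (ennreal (l powr - \<alpha>) * ?osc \<alpha>)"
    using \<open>0 < C\<close> by (simp add: ennreal_mult mult.assoc)
  finally show "(INF c. ennreal (l powr - \<beta>) * choquet \<beta> (cube x l) (\<lambda>y. \<bar>u y - c\<bar>))
      \<le> ennreal C * (ennreal (l powr - \<alpha>) * ?osc \<alpha>)" .
qed

lemma bmo_norm_le_larger_dim:
  fixes Q0 :: "'a::euclidean_space set"
  assumes "0 < \<alpha>" "\<alpha> \<le> \<beta>"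
  shows "bmo_norm \<beta> Q0 u \<le> ennreal (content_ratio \<alpha> \<beta> (real DIM('a) + 1)) * bmo_norm \<alpha> Q0 u"
  unfolding bmo_norm_def SUP_mult_left_ennreal
  by (rule SUP_mono) (use assms cube_oscillation_le in fastforce)

lemma BMO_subset_larger_dim:
  fixes Q0 :: "'a::euclidean_space set"
  assumes \<alpha>\<beta>: "0 < \<alpha>" "\<alpha> \<le> \<beta>" and "bounded Q0"
  shows "BMO \<alpha> Q0 \<subseteq> BMO \<beta> Q0"
proof
  fix u assume "u \<in> BMO \<alpha> Q0"
  then have qc: "quasicont \<alpha> Q0 u" and L1: "choquet \<alpha> Q0 (\<lambda>x. \<bar>u x\<bar>) < \<infinity>"
    and bmo: "bmo_norm \<alpha> Q0 u < \<infinity>"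
    unfolding BMO_def L1H_def by auto
  obtain R where "0 < R" "Q0 \<subseteq> ball 0 R"
    using bounded_subset_ballD[OF \<open>bounded Q0\<close>] by blast
  then have "choquet \<beta> Q0 (\<lambda>x. \<bar>u x\<bar>) \<le> ennreal (content_ratio \<alpha> \<beta> R) * choquet \<alpha> Q0 (\<lambda>x. \<bar>u x\<bar>)"
    using hcontent_le_of_subset_ball[OF \<alpha>\<beta>] by (intro choquet_le_cmult) blast
  also have "\<dots> < \<infinity>"
    using L1 by (simp add: ennreal_mult_less_top)
  finally have "choquet \<beta> Q0 (\<lambda>x. \<bar>u x\<bar>) < \<infinity>" .
  moreover have "bmo_norm \<beta> Q0 u < \<infinity>"
    using bmo_norm_le_larger_dim[OF \<alpha>\<beta>, of Q0 u] bmo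
    by (simp add: ennreal_mult_less_top le_less_trans)
  ultimately show "u \<in> BMO \<beta> Q0"
    using quasicont_larger_dim[OF \<alpha>\<beta> qc] unfolding BMO_def L1H_def by auto
qed

theorem corollary1p6:
  fixes \<alpha> \<beta> :: real
  assumes "0 < \<alpha>" "\<alpha> \<le> \<beta>" "\<beta> \<le> real DIM('a::euclidean_space)"
  shows "\<exists>C>0. \<forall>(x0::'a) l0 (u::'a \<Rightarrow> real). 0 < l0 \<and> u \<in> BMO \<alpha> (cube x0 l0) \<longrightarrow>
           u \<in> BMO \<beta> (cube x0 l0) \<and>
           bmo_norm \<beta> (cube x0 l0) u \<le> ennreal C * bmo_norm \<alpha> (cube x0 l0) u"
proof (intro exI conjI allI impI)
  show "0 < content_ratio \<alpha> \<beta> (real DIM('a) + 1)"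
    using assms by (simp add: content_ratio_pos add_pos_nonneg)
  fix x0 :: 'a and l0 and u :: "'a \<Rightarrow> real"
  assume "0 < l0 \<and> u \<in> BMO \<alpha> (cube x0 l0)"
  then show "u \<in> BMO \<beta> (cube x0 l0)"
    using BMO_subset_larger_dim[OF assms(1,2) bounded_cbox] by (auto simp: cube_def)
  show "bmo_norm \<beta> (cube x0 l0) u \<le> ennreal (content_ratio \<alpha> \<beta> (real DIM('a) + 1)) * bmo_norm \<alpha> (cube x0 l0) u"
    using bmo_norm_le_larger_dim[OF assms(1,2)] .
qed

end
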